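(* Let $n$ be a positive even integer and let $f$ be a real polynomial of degree $d\le 5$. Then the Abel equation $$x'=t^{n-1}x^2+f(t)x^3,\qquad t\in[-1,1],$$ has a center at $x=0$ if and only if $f$ is an odd polynomial (i.e. contains only odd powers of $t$).
   Context: The Abel equation $x'=g(t)x^2+f(t)x^3$ on $[-1,1]$ (with $x$ real) is said to have a center at $x=0$ if every solution $x(t)$ whose initial value $x(-1)$ is small enough in absolute value is defined on $[-1,1]$ and satisfies $x(-1)=x(1)$. *)

theory Defs
  imports Complex_Main "HOL-Computational_Algebra.Polynomial"
begin

definition abel_solution :: "(real \<Rightarrow> real) \<Rightarrow> (real \<Rightarrow> real) \<Rightarrow> (real \<Rightarrow> real) \<Rightarrow> bool" where
  "abel_solution g f x \<longleftrightarrow>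
     (\<forall>t\<in>{-1..1}. (x has_real_derivative (g t * (x t)^2 + f t * (x t)^3)) (at t within {-1..1}))"

definition abel_center :: "(real \<Rightarrow> real) \<Rightarrow> (real \<Rightarrow> real) \<Rightarrow> bool" where
  "abel_center g f \<longleftrightarrow>
     (\<exists>\<delta>>0. \<forall>x0. \<bar>x0\<bar> < \<delta> \<longrightarrow>
        (\<exists>x. abel_solution g f x \<and> x (-1) = x0) \<and>
        (\<forall>x. abel_solution g f x \<and> x (-1) = x0 \<longrightarrow> x 1 = x0))"

definition odd_poly :: "real poly \<Rightarrow> bool" where
  "odd_poly p \<longleftrightarrow> (\<forall>i. even i \<longrightarrow> coeff p i = 0)"

end

theory Submission
  imports Defs "HOL-Analysis.Analysis"
begin

text \<open>
  If g and f are odd, then t \<mapsto> x(-t) is again a solution that agrees with x at t = 0, so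
  uniqueness gives x(1) = x(-1); small initial values lead to solutions on all of [-1,1] by a
  contraction argument.

  Conversely, let P and Q be the primitives of g and f vanishing at -1, and suppose P(1) = 0.
  A solution u with u(-1) = x0 > 0 satisfies (1/u)' = -g - f u, and bootstrapping the equation
  gives u = x0 + x0^2 P + x0^3 (P^2 + Q) + O(x0^4) uniformly on [-1,1]. Hence if u(1) = u(-1)
  for all small x0, the moments \<integral> f, \<integral> f P and \<integral> f (P^2 + Q) over [-1,1] vanish.
  For g = t^(n-1) with n even we have P = (t^n - 1)/n, and these conditions say that
  \<integral> t^m f(t) dt = 0 for m = 0, n, 2n. If f = \<Sum> a_i t^i has degree at most 5, this reads
  a_0/(m+1) + a_2/(m+3) + a_4/(m+5) = 0 at three distinct m; clearing denominators gives a
  quadratic in m with three roots, which forces a_0 = a_2 = a_4 = 0.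
\<close>

section \<open>Scalar differential equations on an interval\<close>

lemma abs_mult_le_mono:
  fixes a b :: real
  shows "\<bar>a\<bar> \<le> A \<Longrightarrow> \<bar>b\<bar> \<le> B \<Longrightarrow> \<bar>a * b\<bar> \<le> A * B"
  by (simp add: abs_mult mult_mono')

lemma abs_power_diff_le:
  fixes p q r :: real
  assumes "\<bar>p\<bar> \<le> r" "\<bar>q\<bar> \<le> r"
  shows "\<bar>p ^ m - q ^ m\<bar> \<le> m * r ^ (m - 1) * \<bar>p - q\<bar>"
proof (cases "r = 0 \<or> m = 0")
  case True
  then show ?thesis using assms by auto
next
  case False
  then have r: "r > 0" and m: "m \<ge> 1" using assms by auto
  have "\<bar>(p / r) ^ m - (q / r) ^ m\<bar> \<le> m * \<bar>p / r - q / r\<bar>"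
    using norm_power_diff[of "p / r" "q / r" m] assms r by (simp add: abs_divide)
  then have "\<bar>p ^ m - q ^ m\<bar> / r ^ m \<le> m * \<bar>p - q\<bar> / r"
    using r by (simp add: power_divide diff_divide_distrib[symmetric] abs_divide)
  then have "\<bar>p ^ m - q ^ m\<bar> \<le> m * \<bar>p - q\<bar> * r ^ m / r"
    using r by (simp add: field_simps)
  also have "m * \<bar>p - q\<bar> * r ^ m / r = m * r ^ (m - 1) * \<bar>p - q\<bar>"
    using r m by (simp add: power_eq_if)
  finally show ?thesis .
qed

lemma abs_le_if_deriv_bounded:
  fixes e e' :: "real \<Rightarrow> real"
  assumes "\<And>s. s \<in> {a..b} \<Longrightarrow> (e has_real_derivative e' s) (at s within {a..b})"
    and "\<And>s. s \<in> {a..b} \<Longrightarrow> \<bar>e' s\<bar> \<le> B" and "e a = 0" and t: "t \<in> {a..b}"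
  shows "\<bar>e t\<bar> \<le> B * (b - a)"
proof -
  have "\<bar>e t - e a\<bar> \<le> B * \<bar>t - a\<bar>"
    using field_differentiable_bound[of "{a..b}" e e' B t a] assms by auto
  also have "\<dots> \<le> B * (b - a)"
    using assms(2)[of a] t by (intro mult_left_mono) auto
  finally show ?thesis using \<open>e a = 0\<close> by simp
qed

lemma deriv_nonpos_imp_le:
  fixes h h' :: "real \<Rightarrow> real"
  assumes "a \<le> b"
    and "\<And>s. s \<in> {a..b} \<Longrightarrow> (h has_real_derivative h' s) (at s within {a..b})"
    and "\<And>s. s \<in> {a..b} \<Longrightarrow> h' s \<le> 0"
  shows "h b \<le> h a"
proof -
  obtain z where z: "z \<in> {a..b}" "h b - h a = h' z * (b - a)"
    using mvt_very_simple[of a b h "\<lambda>s. (*) (h' s)"] assms(1,2)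
    by (auto simp: has_field_derivative_def mult.commute)
  have "h' z * (b - a) \<le> 0"
    using z(1) assms(1,3) by (simp add: mult_nonpos_nonneg)
  with z(2) show ?thesis by simp
qed

lemma linear_ode_vanishes:
  fixes w k :: "real \<Rightarrow> real"
  assumes deriv: "\<And>s. s \<in> {a..b} \<Longrightarrow> (w has_real_derivative w s * k s) (at s within {a..b})"
    and bound: "\<And>s. s \<in> {a..b} \<Longrightarrow> k s \<le> L"
    and "w a = 0" and t: "t \<in> {a..b}"
  shows "w t = 0"
proof -
  define h where "h s = (w s)\<^sup>2 * exp (- 2 * L * s)" for s
  have h_deriv: "(h has_real_derivative 2 * (w s)\<^sup>2 * exp (- 2 * L * s) * (k s - L)) (at s within {a..t})"
    if s: "s \<in> {a..t}" for s
  proof -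
    have "(w has_real_derivative w s * k s) (at s within {a..t})"
      using deriv[of s] s t by (auto intro: has_field_derivative_subset)
    then show ?thesis
      unfolding h_def by (auto intro!: derivative_eq_intros simp: algebra_simps power2_eq_square)
  qed
  have "h t \<le> h a"
    by (rule deriv_nonpos_imp_le[OF _ h_deriv])
      (use t bound in \<open>auto simp: mult_nonneg_nonpos\<close>)
  then have "(w t)\<^sup>2 * exp (- 2 * L * t) \<le> 0"
    using \<open>w a = 0\<close> by (simp add: h_def)
  then show ?thesis by (simp add: mult_le_0_iff)
qed

lemma abs_integral_le:
  fixes h :: "real \<Rightarrow> real"
  assumes "continuous_on {a..b} h" "t \<in> {a..b}" "\<And>s. s \<in> {a..b} \<Longrightarrow> \<bar>h s\<bar> \<le> B"
  shows "\<bar>integral {a..t} h\<bar> \<le> B * (b - a)"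
proof -
  have "norm (integral {a..t} h) \<le> B * (t - a)"
    using assms by (intro integral_bound) (auto intro: continuous_on_subset)
  also have "\<dots> \<le> B * (b - a)"
    using assms(2) assms(3)[of a] by (intro mult_left_mono) auto
  finally show ?thesis by simp
qed

text \<open>
  The Picard operator, with time clamped to [a,b] so that it acts on bounded continuous
  functions on the whole real line.
\<close>

definition picard_map :: "(real \<Rightarrow> real \<Rightarrow> real) \<Rightarrow> real \<Rightarrow> real \<Rightarrow> real \<Rightarrow> (real \<Rightarrow> real) \<Rightarrow> real \<Rightarrow> real"
  where "picard_map F a b x0 \<phi> t = x0 + integral {a..clamp a b t} (\<lambda>s. F s (\<phi> s))"

context
  fixes F :: "real \<Rightarrow> real \<Rightarrow> real" and a b :: real
  assumes ab: "a \<le> b" and cont: "continuous_on ({a..b} \<times> UNIV) (\<lambda>(s, p). F s p)"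
begin

lemma clamp_mem: "clamp a b t \<in> {a..b}"
  using clamp_in_interval[of a b t] ab by simp

lemma continuous_on_rhs_along:
  "continuous_on {a..b} \<phi> \<Longrightarrow> continuous_on {a..b} (\<lambda>s. F s (\<phi> s))"
  by (rule continuous_on_compose2[OF cont, of _ "\<lambda>s. (s, \<phi> s)", simplified])
    (auto intro!: continuous_intros)

lemma picard_map_deriv:
  assumes "continuous_on {a..b} \<phi>" "t \<in> {a..b}"
  shows "(picard_map F a b x0 \<phi> has_real_derivative F t (\<phi> t)) (at t within {a..b})"
proof -
  have "((\<lambda>t. x0 + integral {a..t} (\<lambda>s. F s (\<phi> s))) has_real_derivative F t (\<phi> t)) (at t within {a..b})"
    using integral_has_real_derivative[OF continuous_on_rhs_along[OF assms(1)] assms(2)]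
    by (auto intro!: derivative_eq_intros)
  then show ?thesis
    by (rule has_field_derivative_transform_within[OF _ zero_less_one assms(2)])
      (simp add: picard_map_def clamp_cancel_cbox)
qed

lemma picard_map_continuous:
  assumes "continuous_on {a..b} \<phi>"
  shows "continuous_on UNIV (picard_map F a b x0 \<phi>)"
proof -
  have "continuous_on {a..b} (\<lambda>t. x0 + integral {a..t} (\<lambda>s. F s (\<phi> s)))"
    using integral_has_real_derivative[OF continuous_on_rhs_along[OF assms]]
    by (intro DERIV_continuous_on) (auto intro!: derivative_eq_intros)
  then show ?thesis
    unfolding picard_map_def[abs_def] by (intro clamp_continuous_on) simp
qed

lemma picard_map_bound:
  assumes "continuous_on {a..b} \<phi>" and "\<And>s p. s \<in> {a..b} \<Longrightarrow> \<bar>F s p\<bar> \<le> M"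
  shows "\<bar>picard_map F a b x0 \<phi> t - x0\<bar> \<le> M * (b - a)"
  using abs_integral_le[OF continuous_on_rhs_along[OF assms(1)] clamp_mem] assms(2)
  by (simp add: picard_map_def)

lemma picard_map_lipschitz:
  assumes "continuous_on {a..b} \<phi>" "continuous_on {a..b} \<psi>"
    and "\<And>s. s \<in> {a..b} \<Longrightarrow> \<bar>F s (\<phi> s) - F s (\<psi> s)\<bar> \<le> B"
  shows "\<bar>picard_map F a b x0 \<phi> t - picard_map F a b x0 \<psi> t\<bar> \<le> B * (b - a)"
proof -
  have "picard_map F a b x0 \<phi> t - picard_map F a b x0 \<psi> t
      = integral {a..clamp a b t} (\<lambda>s. F s (\<phi> s) - F s (\<psi> s))"
    unfolding picard_map_def using assms(1,2) clamp_mem[of t]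
    by (subst integral_diff) (auto intro!: integrable_continuous_real intro: continuous_on_subset continuous_on_rhs_along)
  also have "\<bar>\<dots>\<bar> \<le> B * (b - a)"
    using assms clamp_mem by (intro abs_integral_le continuous_intros continuous_on_rhs_along) auto
  finally show ?thesis .
qed

end

lemma ode_solution_exists_small_lipschitz:
  fixes F :: "real \<Rightarrow> real \<Rightarrow> real" and a b L M x0 :: real
  assumes ab: "a \<le> b"
    and cont: "continuous_on ({a..b} \<times> UNIV) (\<lambda>(s, p). F s p)"
    and lip: "\<And>s p q. s \<in> {a..b} \<Longrightarrow> \<bar>F s p - F s q\<bar> \<le> L * \<bar>p - q\<bar>"
    and bound: "\<And>s p. s \<in> {a..b} \<Longrightarrow> \<bar>F s p\<bar> \<le> M"
    and small: "L * (b - a) < 1"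
  obtains u where "u a = x0"
    and "\<And>t. t \<in> {a..b} \<Longrightarrow> (u has_real_derivative F t (u t)) (at t within {a..b})"
    and "\<And>t. t \<in> {a..b} \<Longrightarrow> \<bar>u t - x0\<bar> \<le> M * (b - a)"
proof -
  have "L \<ge> 0" using lip[of a 1 0] ab by simp
  have maps_bcontfun: "picard_map F a b x0 (apply_bcontfun \<phi>) \<in> bcontfun" for \<phi>
  proof (rule bcontfun_normI)
    show "continuous_on UNIV (picard_map F a b x0 (apply_bcontfun \<phi>))"
      by (rule picard_map_continuous[OF ab cont]) simp
    show "norm (picard_map F a b x0 (apply_bcontfun \<phi>) t) \<le> \<bar>x0\<bar> + M * (b - a)" for t
      using picard_map_bound[OF ab cont _ bound, of "apply_bcontfun \<phi>" x0 t] by simp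
  qed
  define T where "T \<phi> = Bcontfun (picard_map F a b x0 (apply_bcontfun \<phi>))" for \<phi>
  have T: "apply_bcontfun (T \<phi>) = picard_map F a b x0 (apply_bcontfun \<phi>)" for \<phi>
    unfolding T_def using maps_bcontfun by (simp add: Bcontfun_inverse)
  have "dist (T \<phi>) (T \<psi>) \<le> L * (b - a) * dist \<phi> \<psi>" for \<phi> \<psi>
  proof (rule dist_bound)
    fix t
    have "\<bar>F s (\<phi> s) - F s (\<psi> s)\<bar> \<le> L * dist \<phi> \<psi>" if "s \<in> {a..b}" for s
      using lip[OF that, of "\<phi> s" "\<psi> s"] dist_bounded[of \<phi> s \<psi>] \<open>L \<ge> 0\<close>
      by (simp add: dist_real_def) (meson mult_left_mono order_trans)
    from picard_map_lipschitz[OF ab cont _ _ this]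
    show "dist (T \<phi> t) (T \<psi> t) \<le> L * (b - a) * dist \<phi> \<psi>"
      unfolding T dist_real_def by (simp add: mult_ac)
  qed
  then obtain \<phi> where "T \<phi> = \<phi>"
    using banach_fix_type[of "L * (b - a)" T] \<open>L \<ge> 0\<close> ab small by auto
  then have u: "apply_bcontfun \<phi> = picard_map F a b x0 (apply_bcontfun \<phi>)"
    using T[of \<phi>] by simp
  show ?thesis
  proof
    show "apply_bcontfun \<phi> a = x0"
      using ab by (subst u) (simp add: picard_map_def clamp_cancel_cbox)
    show "(apply_bcontfun \<phi> has_real_derivative F t (apply_bcontfun \<phi> t)) (at t within {a..b})"
      if "t \<in> {a..b}" for t
      using picard_map_deriv[OF ab cont _ that, of "apply_bcontfun \<phi>" x0] by (subst u) simp
    show "\<bar>apply_bcontfun \<phi> t - x0\<bar> \<le> M * (b - a)" if "t \<in> {a..b}" for t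
      using picard_map_bound[OF ab cont _ bound, of "apply_bcontfun \<phi>" x0 t] by (subst u) simp
  qed
qed

section \<open>Solutions of the Abel equation\<close>

lemma abel_solution_continuous: "abel_solution g f x \<Longrightarrow> continuous_on {-1..1} x"
  unfolding abel_solution_def by (intro DERIV_continuous_on) auto

lemma abel_solution_unique:
  assumes g: "continuous_on {-1..1} g" and f: "continuous_on {-1..1} f"
    and x: "abel_solution g f x" and z: "abel_solution g f z"
    and c_ge: "-1 \<le> c" and t: "c \<le> t" "t \<le> 1" and "x c = z c"
  shows "x t = z t"
proof -
  define k where "k s = g s * (x s + z s) + f s * ((x s)\<^sup>2 + x s * z s + (z s)\<^sup>2)" for s
  have "continuous_on {-1..1} k"
    unfolding k_def using g f abel_solution_continuous[OF x] abel_solution_continuous[OF z]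
    by (intro continuous_intros)
  then obtain L where L: "\<And>s. s \<in> {-1..1} \<Longrightarrow> \<bar>k s\<bar> \<le> L"
    using continuous_on_compact_bound[of "{-1..1}" k] by auto
  have "x t - z t = 0"
  proof (rule linear_ode_vanishes[where w = "\<lambda>s. x s - z s" and k = k and L = L and b = 1])
    fix s assume s: "s \<in> {c..1}"
    have "((\<lambda>s. x s - z s) has_real_derivative
        (g s * (x s)\<^sup>2 + f s * (x s) ^ 3) - (g s * (z s)\<^sup>2 + f s * (z s) ^ 3)) (at s within {-1..1})"
      using x z s c_ge unfolding abel_solution_def by (intro DERIV_diff) auto
    moreover have "(g s * (x s)\<^sup>2 + f s * (x s) ^ 3) - (g s * (z s)\<^sup>2 + f s * (z s) ^ 3) = (x s - z s) * k s"
      unfolding k_def by (simp add: algebra_simps power2_eq_square power3_eq_cube)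
    ultimately show "((\<lambda>s. x s - z s) has_real_derivative (x s - z s) * k s) (at s within {c..1})"
      using c_ge by (auto intro: has_field_derivative_subset)
    show "k s \<le> L" using L[of s] s c_ge by auto
  qed (use \<open>x c = z c\<close> t in auto)
  then show ?thesis by simp
qed

lemma abel_solution_reflect:
  assumes g: "\<And>t. g (-t) = - g t" and f: "\<And>t. f (-t) = - f t" and x: "abel_solution g f x"
  shows "abel_solution g f (\<lambda>t. x (-t))"
  unfolding abel_solution_def
proof
  fix t :: real assume t: "t \<in> {-1..1}"
  have "uminus ` {-1..1::real} = {-1..1}" by auto
  then have "(x has_real_derivative g (-t) * (x (-t))\<^sup>2 + f (-t) * (x (-t)) ^ 3) (at (-t) within uminus ` {-1..1})"
    using x t unfolding abel_solution_def by auto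
  from DERIV_image_chain[OF this DERIV_minus[OF DERIV_ident]]
  show "((\<lambda>t. x (-t)) has_real_derivative g t * (x (-t))\<^sup>2 + f t * (x (-t)) ^ 3) (at t within {-1..1})"
    by (simp add: o_def g f algebra_simps)
qed

lemma abel_solution_returns_if_odd:
  assumes "continuous_on {-1..1} g" "continuous_on {-1..1} f"
    and g_odd: "\<And>t. g (-t) = - g t" and f_odd: "\<And>t. f (-t) = - f t" and x: "abel_solution g f x"
  shows "x 1 = x (-1)"
  using abel_solution_unique[OF assms(1,2) x abel_solution_reflect[OF g_odd f_odd x], of 0 1] by simp

lemma clamp_abs_le:
  fixes r p :: real
  shows "0 \<le> r \<Longrightarrow> \<bar>clamp (-r) r p\<bar> \<le> r"
  using clamp_in_interval[of "-r" r p] by auto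

lemma clamp_lipschitz:
  fixes a b p q :: real
  shows "\<bar>clamp a b p - clamp a b q\<bar> \<le> \<bar>p - q\<bar>"
  using dist_clamps_le_dist_args[of a b p q] by (simp add: dist_real_def)

text \<open>
  Clamping the state to [-r, r] makes the right-hand side globally Lipschitz with a constant of
  order r; solutions starting at \<bar>x0\<bar> = r / 2 never reach the clamp.
\<close>

definition clamped_abel_rhs :: "(real \<Rightarrow> real) \<Rightarrow> (real \<Rightarrow> real) \<Rightarrow> real \<Rightarrow> real \<Rightarrow> real \<Rightarrow> real"
  where "clamped_abel_rhs g f r s p = g s * (clamp (-r) r p)\<^sup>2 + f s * (clamp (-r) r p) ^ 3"

lemma clamped_abel_rhs_continuous:
  assumes g: "continuous_on {-1..1} g" and f: "continuous_on {-1..1} f"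
  shows "continuous_on ({-1..1} \<times> UNIV) (\<lambda>(s, p). clamped_abel_rhs g f r s p)"
proof -
  have clamp: "continuous_on UNIV (clamp (-r) r :: real \<Rightarrow> real)"
    using clamp_continuous_on[of "-r" r "\<lambda>p. p"] by simp
  show ?thesis
    unfolding clamped_abel_rhs_def case_prod_beta
    by (intro continuous_intros continuous_on_compose2[OF g] continuous_on_compose2[OF f]
        continuous_on_compose2[OF clamp]) auto
qed

lemma clamped_abel_rhs_lipschitz:
  assumes r: "0 \<le> r" and g: "\<bar>g s\<bar> \<le> K" and f: "\<bar>f s\<bar> \<le> K"
  shows "\<bar>clamped_abel_rhs g f r s p - clamped_abel_rhs g f r s q\<bar> \<le> K * (2 * r + 3 * r\<^sup>2) * \<bar>p - q\<bar>"
proof -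
  define c where "c = clamp (-r) r"
  have c_bound: "\<bar>c v\<bar> \<le> r" for v
    unfolding c_def using clamp_abs_le[OF r] .
  have "\<bar>(c p)\<^sup>2 - (c q)\<^sup>2\<bar> \<le> 2 * r * \<bar>p - q\<bar>"
    using abs_power_diff_le[OF c_bound[of p] c_bound[of q], where m = 2]
      mult_left_mono[OF clamp_lipschitz[of "-r" r p q], of "2 * r"] r
    unfolding c_def by simp
  moreover have "\<bar>(c p) ^ 3 - (c q) ^ 3\<bar> \<le> 3 * r\<^sup>2 * \<bar>p - q\<bar>"
    using abs_power_diff_le[OF c_bound[of p] c_bound[of q], where m = 3]
      mult_left_mono[OF clamp_lipschitz[of "-r" r p q], of "3 * r\<^sup>2"]
    unfolding c_def by simp
  ultimately have "\<bar>g s\<bar> * \<bar>(c p)\<^sup>2 - (c q)\<^sup>2\<bar> + \<bar>f s\<bar> * \<bar>(c p) ^ 3 - (c q) ^ 3\<bar>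
      \<le> K * (2 * r * \<bar>p - q\<bar>) + K * (3 * r\<^sup>2 * \<bar>p - q\<bar>)"
    using g f by (intro add_mono mult_mono) auto
  moreover have "\<bar>clamped_abel_rhs g f r s p - clamped_abel_rhs g f r s q\<bar>
      \<le> \<bar>g s\<bar> * \<bar>(c p)\<^sup>2 - (c q)\<^sup>2\<bar> + \<bar>f s\<bar> * \<bar>(c p) ^ 3 - (c q) ^ 3\<bar>"
    unfolding clamped_abel_rhs_def c_def[symmetric] abs_mult[symmetric]
    by (rule order_trans[OF _ abs_triangle_ineq]) (simp add: algebra_simps)
  ultimately show ?thesis by (simp add: algebra_simps)
qed

lemma clamped_abel_rhs_bound:
  assumes r: "0 \<le> r" "r \<le> 1" and g: "\<bar>g s\<bar> \<le> K" and f: "\<bar>f s\<bar> \<le> K"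
  shows "\<bar>clamped_abel_rhs g f r s p\<bar> \<le> 2 * K * r\<^sup>2"
proof -
  define c where "c = clamp (-r) r p"
  have c_bound: "\<bar>c\<bar> \<le> r"
    unfolding c_def using clamp_abs_le[OF r(1)] .
  have "\<bar>c\<bar>\<^sup>2 \<le> r\<^sup>2" using power_mono[OF c_bound, of 2] by simp
  moreover have "\<bar>c\<bar> ^ 3 \<le> r\<^sup>2"
    using power_mono[OF c_bound abs_ge_zero, of 3] power_decreasing[of 2 3 r] r by linarith
  ultimately have "\<bar>g s\<bar> * \<bar>c\<bar>\<^sup>2 + \<bar>f s\<bar> * \<bar>c\<bar> ^ 3 \<le> K * r\<^sup>2 + K * r\<^sup>2"
    using g f by (intro add_mono mult_mono) auto
  moreover have "\<bar>clamped_abel_rhs g f r s p\<bar> \<le> \<bar>g s\<bar> * \<bar>c\<bar>\<^sup>2 + \<bar>f s\<bar> * \<bar>c\<bar> ^ 3"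
    unfolding clamped_abel_rhs_def c_def[symmetric] by (metis abs_mult abs_triangle_ineq power_abs)
  ultimately show ?thesis by simp
qed

lemma abel_solution_exists:
  fixes g f :: "real \<Rightarrow> real" and K x0 :: real
  assumes g: "continuous_on {-1..1} g" and f: "continuous_on {-1..1} f" and K: "K \<ge> 1"
    and g_bound: "\<And>t. t \<in> {-1..1} \<Longrightarrow> \<bar>g t\<bar> \<le> K"
    and f_bound: "\<And>t. t \<in> {-1..1} \<Longrightarrow> \<bar>f t\<bar> \<le> K"
    and small: "64 * K * \<bar>x0\<bar> \<le> 1"
  obtains u where "abel_solution g f u" "u (-1) = x0" "\<And>t. t \<in> {-1..1} \<Longrightarrow> \<bar>u t\<bar> \<le> 2 * \<bar>x0\<bar>"
proof -
  define r where "r = 2 * \<bar>x0\<bar>"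
  have r: "0 \<le> r" "32 * K * r \<le> 1" using small unfolding r_def by auto
  have "r \<le> K * r" using mult_right_mono[OF K r(1)] by simp
  with r have "r \<le> 1" by linarith
  have "K * r * r \<le> K * r" using mult_left_mono[OF \<open>r \<le> 1\<close>, of "K * r"] K r by simp
  then have contraction: "K * (2 * r + 3 * r\<^sup>2) * (1 - -1) < 1"
    using r by (simp add: algebra_simps power2_eq_square)
  have rhs_lip: "\<bar>clamped_abel_rhs g f r s p - clamped_abel_rhs g f r s q\<bar> \<le> K * (2 * r + 3 * r\<^sup>2) * \<bar>p - q\<bar>"
    if "s \<in> {-1..1}" for s p q
    using r(1) g_bound[OF that] f_bound[OF that] by (rule clamped_abel_rhs_lipschitz)
  have rhs_bound: "\<bar>clamped_abel_rhs g f r s p\<bar> \<le> 2 * K * r\<^sup>2" if "s \<in> {-1..1}" for s p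
    using r(1) \<open>r \<le> 1\<close> g_bound[OF that] f_bound[OF that] by (rule clamped_abel_rhs_bound)
  obtain u where u: "u (-1) = x0"
    and u_deriv: "\<And>t. t \<in> {-1..1} \<Longrightarrow>
      (u has_real_derivative clamped_abel_rhs g f r t (u t)) (at t within {-1..1})"
    and u_near: "\<And>t. t \<in> {-1..1} \<Longrightarrow> \<bar>u t - x0\<bar> \<le> 2 * K * r\<^sup>2 * (1 - -1)"
    by (rule ode_solution_exists_small_lipschitz[OF _ clamped_abel_rhs_continuous[OF g f]
          rhs_lip rhs_bound contraction]) auto
  have u_bound: "\<bar>u t\<bar> \<le> r" if "t \<in> {-1..1}" for t
  proof -
    have "(32 * K * r) * r \<le> 1 * r" using r by (intro mult_right_mono) auto
    then have "4 * K * r\<^sup>2 \<le> r / 8" by (simp add: power2_eq_square)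
    then show ?thesis using u_near[OF that] unfolding r_def by (simp add: power2_eq_square)
  qed
  show ?thesis
  proof
    show "abel_solution g f u"
      unfolding abel_solution_def
    proof
      fix t :: real assume t: "t \<in> {-1..1}"
      have "clamp (-r) r (u t) = u t"
        using u_bound[OF t] by (simp add: clamp_cancel_cbox abs_le_iff)
      then show "(u has_real_derivative g t * (u t)\<^sup>2 + f t * (u t) ^ 3) (at t within {-1..1})"
        using u_deriv[OF t] by (simp add: clamped_abel_rhs_def)
    qed
  qed (use u u_bound r_def in auto)
qed

lemma continuous_on_Icc_bound:
  fixes h :: "real \<Rightarrow> real"
  assumes "continuous_on {-1..1} h"
  obtains K where "K \<ge> 1" "\<And>t. t \<in> {-1..1} \<Longrightarrow> \<bar>h t\<bar> \<le> K"
proof -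
  obtain B where "\<And>t. t \<in> {-1..1} \<Longrightarrow> \<bar>h t\<bar> \<le> B"
    using continuous_on_compact_bound[OF compact_Icc assms] by auto
  then show ?thesis using that[of "max 1 B"] by fastforce
qed

lemma abel_center_if_odd:
  assumes g: "continuous_on {-1..1} g" and f: "continuous_on {-1..1} f"
    and g_odd: "\<And>t. g (-t) = - g t" and f_odd: "\<And>t. f (-t) = - f t"
  shows "abel_center g f"
proof -
  have "continuous_on {-1..1} (\<lambda>t. \<bar>g t\<bar> + \<bar>f t\<bar>)"
    using g f by (intro continuous_intros)
  then obtain K where K: "K \<ge> 1" and gf_bound: "\<And>t. t \<in> {-1..1} \<Longrightarrow> \<bar>\<bar>g t\<bar> + \<bar>f t\<bar>\<bar> \<le> K"
    by (rule continuous_on_Icc_bound) auto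
  have bounds: "\<bar>g t\<bar> \<le> K" "\<bar>f t\<bar> \<le> K" if "t \<in> {-1..1}" for t
    using gf_bound[OF that] by auto
  show ?thesis
    unfolding abel_center_def
  proof (intro exI[of _ "1 / (64 * K)"] conjI allI impI)
    show "0 < 1 / (64 * K)" using K by simp
  next
    fix x0 :: real assume "\<bar>x0\<bar> < 1 / (64 * K)"
    then have "64 * K * \<bar>x0\<bar> \<le> 1" using K by (simp add: field_simps)
    then obtain u where "abel_solution g f u" "u (-1) = x0"
      using abel_solution_exists[OF g f K bounds] by blast
    then show "\<exists>x. abel_solution g f x \<and> x (-1) = x0" by blast
  next
    fix x0 :: real and x assume "abel_solution g f x \<and> x (-1) = x0"
    then show "x 1 = x0" using abel_solution_returns_if_odd[of g f x, OF g f g_odd f_odd] by simp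
  qed
qed

section \<open>A center forces three moments to vanish\<close>

definition primitive :: "(real \<Rightarrow> real) \<Rightarrow> (real \<Rightarrow> real) \<Rightarrow> bool" where
  "primitive F f \<longleftrightarrow> F (-1) = 0 \<and> (\<forall>t\<in>{-1..1}. (F has_real_derivative f t) (at t within {-1..1}))"

lemma primitive_continuous: "primitive F f \<Longrightarrow> continuous_on {-1..1} F"
  unfolding primitive_def by (intro DERIV_continuous_on) auto

locale abel_small_solution =
  fixes g f P Q u :: "real \<Rightarrow> real" and K x0 :: real
  assumes K: "K \<ge> 1"
    and g_bound: "\<And>t. t \<in> {-1..1} \<Longrightarrow> \<bar>g t\<bar> \<le> K"
    and f_bound: "\<And>t. t \<in> {-1..1} \<Longrightarrow> \<bar>f t\<bar> \<le> K"
    and P_bound: "\<And>t. t \<in> {-1..1} \<Longrightarrow> \<bar>P t\<bar> \<le> K"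
    and P: "primitive P g" and Q: "primitive Q f"
    and u: "abel_solution g f u" and u_start: "u (-1) = x0"
    and x0: "0 < x0" "64 * K * x0 \<le> 1"
    and u_bound: "\<And>t. t \<in> {-1..1} \<Longrightarrow> \<bar>u t\<bar> \<le> 2 * x0"
begin

lemma u_deriv: "t \<in> {-1..1} \<Longrightarrow> (u has_real_derivative g t * (u t)\<^sup>2 + f t * (u t) ^ 3) (at t within {-1..1})"
  using u unfolding abel_solution_def by auto

lemma x0_small: "x0 \<le> K * x0" "K * x0 \<le> 1 / 64" "x0 \<le> 1 / 64"
proof -
  show "x0 \<le> K * x0" using mult_right_mono[OF K] x0 by simp
  moreover show "K * x0 \<le> 1 / 64" using x0 by simp
  ultimately show "x0 \<le> 1 / 64" by linarith
qed

lemma u_power_bound: "t \<in> {-1..1} \<Longrightarrow> \<bar>u t ^ m\<bar> \<le> (2 * x0) ^ m"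
  unfolding power_abs by (rule power_mono[OF u_bound abs_ge_zero])

lemma first_order_bound:
  assumes s: "s \<in> {-1..1}"
  shows "\<bar>u s - x0\<bar> \<le> 16 * K * x0\<^sup>2"
proof -
  have "\<bar>g t * (u t)\<^sup>2 + f t * (u t) ^ 3\<bar> \<le> 8 * K * x0\<^sup>2" if t: "t \<in> {-1..1}" for t
  proof -
    have "\<bar>g t * (u t)\<^sup>2 + f t * (u t) ^ 3\<bar> \<le> K * (2 * x0)\<^sup>2 + K * (2 * x0) ^ 3"
      using abs_mult_le_mono[OF g_bound u_power_bound] abs_mult_le_mono[OF f_bound u_power_bound] t
      by (smt (verit))
    also have "\<dots> \<le> K * (2 * x0)\<^sup>2 + K * (2 * x0)\<^sup>2"
      using power_decreasing[of 2 3 "2 * x0"] x0 x0_small K by (intro add_left_mono mult_left_mono) auto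
    also have "\<dots> = 8 * K * x0\<^sup>2"
      by (simp add: power2_eq_square)
    finally show ?thesis .
  qed
  then have "\<bar>u s - x0\<bar> \<le> 8 * K * x0\<^sup>2 * (1 - -1)"
    using u_deriv u_start s
    by (intro abs_le_if_deriv_bounded[where e' = "\<lambda>t. g t * (u t)\<^sup>2 + f t * (u t) ^ 3"])
      (auto intro!: derivative_eq_intros)
  then show ?thesis by simp
qed

lemma square_first_order_bound:
  assumes s: "s \<in> {-1..1}"
  shows "\<bar>(u s)\<^sup>2 - x0\<^sup>2\<bar> \<le> 48 * K * x0 ^ 3"
proof -
  have "\<bar>u s + x0\<bar> \<le> 3 * x0"
    using u_bound[OF s] x0 by linarith
  then have "\<bar>(u s - x0) * (u s + x0)\<bar> \<le> 16 * K * x0\<^sup>2 * (3 * x0)"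
    by (rule abs_mult_le_mono[OF first_order_bound[OF s]])
  moreover have "(u s - x0) * (u s + x0) = (u s)\<^sup>2 - x0\<^sup>2"
    by (simp add: algebra_simps power2_eq_square)
  ultimately show ?thesis by (simp add: power2_eq_square power3_eq_cube)
qed

lemma cube_first_order_bound:
  assumes s: "s \<in> {-1..1}"
  shows "\<bar>(u s) ^ 3 - x0 ^ 3\<bar> \<le> 112 * K * x0 ^ 4"
proof -
  have "\<bar>(u s)\<^sup>2\<bar> \<le> 4 * x0\<^sup>2" "\<bar>u s * x0\<bar> \<le> 2 * x0 * x0"
    using u_power_bound[OF s, of 2] abs_mult_le_mono[OF u_bound[OF s], of x0 x0] x0
    by (simp_all add: power2_eq_square)
  then have "\<bar>(u s)\<^sup>2 + u s * x0 + x0\<^sup>2\<bar> \<le> 7 * x0\<^sup>2"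
    using abs_triangle_ineq[of "(u s)\<^sup>2 + u s * x0" "x0\<^sup>2"] abs_triangle_ineq[of "(u s)\<^sup>2" "u s * x0"]
    by (simp add: power2_eq_square)
  then have "\<bar>(u s - x0) * ((u s)\<^sup>2 + u s * x0 + x0\<^sup>2)\<bar> \<le> 16 * K * x0\<^sup>2 * (7 * x0\<^sup>2)"
    by (rule abs_mult_le_mono[OF first_order_bound[OF s]])
  moreover have "(u s - x0) * ((u s)\<^sup>2 + u s * x0 + x0\<^sup>2) = (u s) ^ 3 - x0 ^ 3"
    by (simp add: algebra_simps power2_eq_square power3_eq_cube)
  ultimately show ?thesis by (simp add: power_numeral_reduce)
qed

lemma second_order_bound:
  assumes s: "s \<in> {-1..1}"
  shows "\<bar>u s - x0 - x0\<^sup>2 * P s\<bar> \<le> 112 * K\<^sup>2 * x0 ^ 3"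
proof -
  have "\<bar>g t * ((u t)\<^sup>2 - x0\<^sup>2) + f t * (u t) ^ 3\<bar> \<le> 56 * K\<^sup>2 * x0 ^ 3" if t: "t \<in> {-1..1}" for t
  proof -
    have "\<bar>g t * ((u t)\<^sup>2 - x0\<^sup>2)\<bar> \<le> K * (48 * K * x0 ^ 3)"
      by (rule abs_mult_le_mono[OF g_bound[OF t] square_first_order_bound[OF t]])
    moreover have "\<bar>f t * (u t) ^ 3\<bar> \<le> K * (2 * x0) ^ 3"
      by (rule abs_mult_le_mono[OF f_bound[OF t] u_power_bound[OF t]])
    moreover have "K * (2 * x0) ^ 3 \<le> K\<^sup>2 * (8 * x0 ^ 3)"
      using K x0 by (simp add: power2_eq_square mult_right_mono)
    ultimately show ?thesis
      using abs_triangle_ineq[of "g t * ((u t)\<^sup>2 - x0\<^sup>2)" "f t * (u t) ^ 3"]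
      by (simp add: power2_eq_square)
  qed
  then have "\<bar>u s - x0 - x0\<^sup>2 * P s\<bar> \<le> 56 * K\<^sup>2 * x0 ^ 3 * (1 - -1)"
    using u_deriv P u_start s unfolding primitive_def
    by (intro abs_le_if_deriv_bounded[where e' = "\<lambda>t. g t * ((u t)\<^sup>2 - x0\<^sup>2) + f t * (u t) ^ 3"])
      (auto intro!: derivative_eq_intros simp: algebra_simps)
  then show ?thesis by simp
qed

lemma square_second_order_bound:
  assumes s: "s \<in> {-1..1}"
  shows "\<bar>(u s)\<^sup>2 - x0\<^sup>2 - 2 * x0 ^ 3 * P s\<bar> \<le> 449 * K\<^sup>2 * x0 ^ 4"
proof -
  have "\<bar>x0\<^sup>2 * P s\<bar> \<le> x0\<^sup>2 * K"
    using P_bound[OF s] by (simp add: abs_mult mult_left_mono)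
  also have "\<dots> \<le> x0"
    using mult_left_mono[OF x0_small(2), of x0] x0 by (simp add: power2_eq_square mult_ac)
  finally have "\<bar>u s + x0 + x0\<^sup>2 * P s\<bar> \<le> 4 * x0"
    using u_bound[OF s] x0 by linarith
  then have "\<bar>(u s - x0 - x0\<^sup>2 * P s) * (u s + x0 + x0\<^sup>2 * P s)\<bar> \<le> 112 * K\<^sup>2 * x0 ^ 3 * (4 * x0)"
    by (rule abs_mult_le_mono[OF second_order_bound[OF s]])
  moreover have "\<bar>x0 ^ 4 * (P s)\<^sup>2\<bar> \<le> x0 ^ 4 * K\<^sup>2"
    using power_mono[OF P_bound[OF s] abs_ge_zero, of 2] by (simp add: abs_mult power_abs mult_left_mono)
  moreover have "(u s)\<^sup>2 - x0\<^sup>2 - 2 * x0 ^ 3 * P s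
      = (u s - x0 - x0\<^sup>2 * P s) * (u s + x0 + x0\<^sup>2 * P s) + x0 ^ 4 * (P s)\<^sup>2"
    by (simp add: algebra_simps power2_eq_square power3_eq_cube power4_eq_xxxx)
  ultimately have "\<bar>(u s)\<^sup>2 - x0\<^sup>2 - 2 * x0 ^ 3 * P s\<bar> \<le> 112 * K\<^sup>2 * x0 ^ 3 * (4 * x0) + x0 ^ 4 * K\<^sup>2"
    using abs_triangle_ineq[of "(u s - x0 - x0\<^sup>2 * P s) * (u s + x0 + x0\<^sup>2 * P s)" "x0 ^ 4 * (P s)\<^sup>2"]
    by linarith
  also have "\<dots> = 449 * K\<^sup>2 * x0 ^ 4"
    by (simp add: algebra_simps power_numeral_reduce)
  finally show ?thesis .
qed

lemma third_order_bound:
  assumes s: "s \<in> {-1..1}"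
  shows "\<bar>u s - x0 - x0\<^sup>2 * P s - x0 ^ 3 * ((P s)\<^sup>2 + Q s)\<bar> \<le> 1200 * K ^ 3 * x0 ^ 4"
proof -
  define D where "D t = g t * ((u t)\<^sup>2 - x0\<^sup>2 - 2 * x0 ^ 3 * P t) + f t * ((u t) ^ 3 - x0 ^ 3)" for t
  have "\<bar>D t\<bar> \<le> 600 * K ^ 3 * x0 ^ 4" if t: "t \<in> {-1..1}" for t
  proof -
    have "\<bar>g t * ((u t)\<^sup>2 - x0\<^sup>2 - 2 * x0 ^ 3 * P t)\<bar> \<le> K * (449 * K\<^sup>2 * x0 ^ 4)"
      by (rule abs_mult_le_mono[OF g_bound[OF t] square_second_order_bound[OF t]])
    moreover have "\<bar>f t * ((u t) ^ 3 - x0 ^ 3)\<bar> \<le> K * (112 * K * x0 ^ 4)"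
      by (rule abs_mult_le_mono[OF f_bound[OF t] cube_first_order_bound[OF t]])
    moreover have "K * (112 * K * x0 ^ 4) \<le> K * (112 * K * x0 ^ 4) * K"
      using K x0 by (simp add: mult_left_mono)
    ultimately show ?thesis
      unfolding D_def using abs_triangle_ineq[of "g t * ((u t)\<^sup>2 - x0\<^sup>2 - 2 * x0 ^ 3 * P t)"
          "f t * ((u t) ^ 3 - x0 ^ 3)"]
      by (simp add: power_numeral_reduce mult_ac)
  qed
  then have "\<bar>u s - x0 - x0\<^sup>2 * P s - x0 ^ 3 * ((P s)\<^sup>2 + Q s)\<bar> \<le> 600 * K ^ 3 * x0 ^ 4 * (1 - -1)"
    using u_deriv P Q u_start s unfolding primitive_def
    by (intro abs_le_if_deriv_bounded[where e' = D]) (auto intro!: derivative_eq_intros simp: D_def algebra_simps)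
  then show ?thesis by simp
qed

lemma u_pos:
  assumes "t \<in> {-1..1}"
  shows "u t > 0"
proof -
  have "16 * K * x0\<^sup>2 \<le> x0 / 4"
    using x0_small x0 by (simp add: power2_eq_square)
  then show ?thesis using first_order_bound[OF assms] x0 by linarith
qed

lemma return_moment_bound:
  assumes Sb: "primitive Sb (\<lambda>t. f t * P t)" and Sc: "primitive Sc (\<lambda>t. f t * ((P t)\<^sup>2 + Q t))"
    and "P 1 = 0" and "u 1 = x0"
  shows "\<bar>x0 * Q 1 + x0\<^sup>2 * Sb 1 + x0 ^ 3 * Sc 1\<bar> \<le> 2400 * K ^ 4 * x0 ^ 4"
proof -
  \<comment> \<open>Since (1/u)' = -(g + f u), only the third-order remainder survives in Y'.\<close>
  define v where "v = (\<lambda>t. inverse (u t))"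
  define Y where "Y t = v t + P t - inverse x0 + x0 * Q t + x0\<^sup>2 * Sb t + x0 ^ 3 * Sc t" for t
  have Y_deriv: "(Y has_real_derivative - (f t * (u t - x0 - x0\<^sup>2 * P t - x0 ^ 3 * ((P t)\<^sup>2 + Q t))))
      (at t within {-1..1})" if t: "t \<in> {-1..1}" for t
  proof -
    have "((\<lambda>t. inverse (u t)) has_real_derivative
        - ((g t * (u t)\<^sup>2 + f t * (u t) ^ 3) * inverse (u t ^ Suc (Suc 0)))) (at t within {-1..1})"
      using DERIV_inverse_fun[OF u_deriv[OF t]] u_pos[OF t] by simp
    moreover have "- ((g t * (u t)\<^sup>2 + f t * (u t) ^ 3) * inverse (u t ^ Suc (Suc 0))) = - (g t + f t * u t)"
      using u_pos[OF t] by (simp add: field_simps power2_eq_square power3_eq_cube)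
    ultimately have "(v has_real_derivative - (g t + f t * u t)) (at t within {-1..1})"
      by (simp add: v_def)
    then show ?thesis
      unfolding Y_def using P Q Sb Sc t unfolding primitive_def
      by (auto intro!: derivative_eq_intros simp: algebra_simps)
  qed
  moreover have "\<bar>- (f t * (u t - x0 - x0\<^sup>2 * P t - x0 ^ 3 * ((P t)\<^sup>2 + Q t)))\<bar>
      \<le> K * (1200 * K ^ 3 * x0 ^ 4)" if "t \<in> {-1..1}" for t
    using abs_mult_le_mono[OF f_bound[OF that] third_order_bound[OF that]] by simp
  moreover have "Y (-1) = 0"
    using u_start P Q Sb Sc unfolding primitive_def by (simp add: Y_def v_def)
  ultimately have "\<bar>Y 1\<bar> \<le> K * (1200 * K ^ 3 * x0 ^ 4) * (1 - -1)"
    by (intro abs_le_if_deriv_bounded) auto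
  moreover have "Y 1 = x0 * Q 1 + x0\<^sup>2 * Sb 1 + x0 ^ 3 * Sc 1"
    using assms(3,4) by (simp add: Y_def v_def)
  ultimately show ?thesis by (simp add: power_numeral_reduce)
qed

end

lemma coeff_eq_0_if_poly_small_at_0:
  fixes p :: "real poly"
  assumes "\<eta> > 0" and "\<And>x. 0 < x \<Longrightarrow> x < \<eta> \<Longrightarrow> \<bar>poly p x\<bar> \<le> D * x ^ m" and "i < m"
  shows "coeff p i = 0"
  using assms(2,3)
proof (induction m arbitrary: p i)
  case 0
  then show ?case by simp
next
  case (Suc m)
  have "\<bar>poly p 0\<bar> \<le> 0"
  proof (rule tendsto_le[of "at_right 0"])
    show "((\<lambda>x. D * x ^ Suc m) \<longlongrightarrow> 0) (at_right 0)"
      by (auto intro!: tendsto_eq_intros)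
    show "((\<lambda>x. \<bar>poly p x\<bar>) \<longlongrightarrow> \<bar>poly p 0\<bar>) (at_right 0)"
      by (intro tendsto_intros)
    show "\<forall>\<^sub>F x in at_right 0. \<bar>poly p x\<bar> \<le> D * x ^ Suc m"
      unfolding eventually_at_right_field using Suc.prems(1) \<open>\<eta> > 0\<close> by blast
  qed simp
  then have "coeff p 0 = 0" by (simp add: poly_0_coeff_0)
  obtain q where p: "p = pCons 0 q"
    using \<open>coeff p 0 = 0\<close> by (cases p) simp
  have "\<bar>poly q x\<bar> \<le> D * x ^ m" if x: "0 < x" "x < \<eta>" for x
    using Suc.prems(1)[OF x] x unfolding p by (simp add: abs_mult)
  then have "coeff q j = 0" if "j < m" for j
    using Suc.IH that by blast
  then show ?case
    using Suc.prems(2) unfolding p by (cases i) auto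
qed

lemma abel_center_imp_moments_vanish:
  fixes g f P Q Sb Sc :: "real \<Rightarrow> real"
  assumes g: "continuous_on {-1..1} g" and f: "continuous_on {-1..1} f"
    and P: "primitive P g" and P_1: "P 1 = 0" and Q: "primitive Q f"
    and Sb: "primitive Sb (\<lambda>t. f t * P t)" and Sc: "primitive Sc (\<lambda>t. f t * ((P t)\<^sup>2 + Q t))"
    and center: "abel_center g f"
  shows "Q 1 = 0" "Sb 1 = 0" "Sc 1 = 0"
proof -
  have "continuous_on {-1..1} (\<lambda>t. \<bar>g t\<bar> + \<bar>f t\<bar> + \<bar>P t\<bar>)"
    using g f primitive_continuous[OF P] by (intro continuous_intros)
  then obtain K where K: "K \<ge> 1"
    and gfP_bound: "\<And>t. t \<in> {-1..1} \<Longrightarrow> \<bar>\<bar>g t\<bar> + \<bar>f t\<bar> + \<bar>P t\<bar>\<bar> \<le> K"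
    by (rule continuous_on_Icc_bound) auto
  have bounds: "\<bar>g t\<bar> \<le> K" "\<bar>f t\<bar> \<le> K" "\<bar>P t\<bar> \<le> K" if "t \<in> {-1..1}" for t
    using gfP_bound[OF that] by auto
  obtain \<delta> where "\<delta> > 0" and returns: "\<And>x0 x. \<bar>x0\<bar> < \<delta> \<Longrightarrow> abel_solution g f x \<Longrightarrow> x (-1) = x0 \<Longrightarrow> x 1 = x0"
    using center unfolding abel_center_def by blast
  define \<eta> where "\<eta> = min \<delta> (1 / (64 * K))"
  have "\<bar>poly [:0, Q 1, Sb 1, Sc 1:] x0\<bar> \<le> 2400 * K ^ 4 * x0 ^ 4" if x0: "0 < x0" "x0 < \<eta>" for x0
  proof -
    have "64 * K * x0 \<le> 1" using x0 K by (simp add: \<eta>_def field_simps)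
    then obtain u where u: "abel_solution g f u" "u (-1) = x0" "\<And>t. t \<in> {-1..1} \<Longrightarrow> \<bar>u t\<bar> \<le> 2 * x0"
      using abel_solution_exists[OF g f K bounds(1,2), of x0] x0 by auto
    have "u 1 = x0" using returns[OF _ u(1,2)] x0 by (simp add: \<eta>_def)
    interpret abel_small_solution g f P Q u K x0
      using K bounds P Q u x0 \<open>64 * K * x0 \<le> 1\<close> by unfold_locales auto
    show ?thesis
      using return_moment_bound[OF Sb Sc P_1 \<open>u 1 = x0\<close>]
      by (simp add: algebra_simps power2_eq_square power3_eq_cube)
  qed
  then have "coeff [:0, Q 1, Sb 1, Sc 1:] i = 0" if "i < 4" for i
    using that K by (intro coeff_eq_0_if_poly_small_at_0[of \<eta>]) (auto simp: \<eta>_def \<open>\<delta> > 0\<close>)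
  from this[of 1] this[of 2] this[of 3] show "Q 1 = 0" "Sb 1 = 0" "Sc 1 = 0"
    by (simp_all add: numeral_eq_Suc)
qed

section \<open>Moments of polynomials\<close>

lemma poly_minus_if_odd_poly:
  assumes "odd_poly p"
  shows "poly p (-t) = - poly p t"
  unfolding poly_altdef sum_negf[symmetric]
proof (rule sum.cong)
  fix i assume "i \<in> {..degree p}"
  show "coeff p i * (- t) ^ i = - (coeff p i * t ^ i)"
    using assms by (cases "even i") (auto simp: odd_poly_def power_minus_odd)
qed simp

text \<open>The integral of s^m p(s) over [-1, t].\<close>

definition poly_moment :: "real poly \<Rightarrow> nat \<Rightarrow> real \<Rightarrow> real" where
  "poly_moment p m t =
     (\<Sum>i\<le>degree p. coeff p i * (t ^ (i + m + 1) - (-1) ^ (i + m + 1)) / real (i + m + 1))"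

lemma poly_moment_deriv: "(poly_moment p m has_real_derivative t ^ m * poly p t) (at t within S)"
proof -
  have monomial: "((\<lambda>t. (t ^ (k + 1) - c) / real (k + 1)) has_real_derivative t ^ k) (at t within S)"
    for k :: nat and c :: real
  proof -
    have "((\<lambda>t. (t ^ (k + 1) - c) / real (k + 1)) has_real_derivative
        (real (k + 1) * t ^ (k + 1 - Suc 0) - 0) / real (k + 1)) (at t within S)"
      by (intro DERIV_cdivide DERIV_diff DERIV_pow DERIV_const)
    then show ?thesis by simp
  qed
  have "(poly_moment p m has_real_derivative (\<Sum>i\<le>degree p. coeff p i * t ^ (i + m))) (at t within S)"
    unfolding poly_moment_def[abs_def] times_divide_eq_right[symmetric]
    by (intro DERIV_sum DERIV_cmult monomial)
  then show ?thesis by (simp add: poly_altdef sum_distrib_left power_add mult_ac)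
qed

lemma poly_moment_start: "poly_moment p m (-1) = 0"
  by (simp add: poly_moment_def)

lemma poly_moment_at_1:
  assumes "even m" "degree p \<le> 5"
  shows "poly_moment p m 1 = 2 * (coeff p 0 / (real m + 1) + coeff p 2 / (real m + 3) + coeff p 4 / (real m + 5))"
proof -
  have "poly_moment p m 1 = (\<Sum>i\<le>5. coeff p i * (1 - (-1) ^ (i + m + 1)) / real (i + m + 1))"
    unfolding poly_moment_def power_one using assms(2) by (intro sum.mono_neutral_left) (auto simp: coeff_eq_0)
  also have "\<dots> = 2 * (coeff p 0 / (real m + 1) + coeff p 2 / (real m + 3) + coeff p 4 / (real m + 5))"
    using assms(1) by (simp add: eval_nat_numeral power_add algebra_simps add_divide_distrib)
  finally show ?thesis .
qed

lemma partial_fractions_vanish: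
  fixes c0 c2 c4 :: real
  assumes y: "0 \<le> y1" "y1 < y2" "y2 < y3"
    and vanish: "\<And>y. y \<in> {y1, y2, y3} \<Longrightarrow> c0 / (y + 1) + c2 / (y + 3) + c4 / (y + 5) = 0"
  shows "c0 = 0 \<and> c2 = 0 \<and> c4 = 0"
proof -
  define \<alpha> \<beta> \<gamma> where "\<alpha> = c0 + c2 + c4" and "\<beta> = 8 * c0 + 6 * c2 + 4 * c4"
    and "\<gamma> = 15 * c0 + 5 * c2 + 3 * c4"
  have quadratic: "\<alpha> * y\<^sup>2 + \<beta> * y + \<gamma> = 0" if "y \<in> {y1, y2, y3}" for y
  proof -
    have "0 \<le> y" using that y by auto
    then have "c0 / (y + 1) * ((y + 1) * (y + 3) * (y + 5)) = c0 * ((y + 3) * (y + 5))"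
      "c2 / (y + 3) * ((y + 1) * (y + 3) * (y + 5)) = c2 * ((y + 1) * (y + 5))"
      "c4 / (y + 5) * ((y + 1) * (y + 3) * (y + 5)) = c4 * ((y + 1) * (y + 3))"
      by simp_all
    then have "(c0 / (y + 1) + c2 / (y + 3) + c4 / (y + 5)) * ((y + 1) * (y + 3) * (y + 5))
        = \<alpha> * y\<^sup>2 + \<beta> * y + \<gamma>"
      unfolding \<alpha>_def \<beta>_def \<gamma>_def distrib_right by (simp add: algebra_simps power2_eq_square)
    with vanish[OF that] show ?thesis by simp
  qed
  have secant: "\<alpha> * (y + z) + \<beta> = 0" if "y \<in> {y1, y2, y3}" "z \<in> {y1, y2, y3}" "y \<noteq> z" for y z
  proof -
    have "(y - z) * (\<alpha> * (y + z) + \<beta>) = (\<alpha> * y\<^sup>2 + \<beta> * y + \<gamma>) - (\<alpha> * z\<^sup>2 + \<beta> * z + \<gamma>)"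
      by (simp add: algebra_simps power2_eq_square)
    then show ?thesis using quadratic[OF that(1)] quadratic[OF that(2)] that(3) by simp
  qed
  have "\<alpha> * (y1 + y2) + \<beta> = 0" "\<alpha> * (y1 + y3) + \<beta> = 0"
    using y by (auto intro!: secant)
  then have "\<alpha> * (y2 - y3) = 0"
    unfolding distrib_left right_diff_distrib by linarith
  then have "\<alpha> = 0" using y by simp
  moreover have "\<beta> = 0" using secant[of y1 y2] y \<open>\<alpha> = 0\<close> by simp
  moreover have "\<gamma> = 0" using quadratic[of y1] \<open>\<alpha> = 0\<close> \<open>\<beta> = 0\<close> by simp
  ultimately show ?thesis unfolding \<alpha>_def \<beta>_def \<gamma>_def by linarith
qed

lemma odd_poly_if_moments_vanish:
  assumes n: "n > 0" "even n" and deg: "degree p \<le> 5"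
    and moments: "poly_moment p 0 1 = 0" "poly_moment p n 1 = 0" "poly_moment p (2 * n) 1 = 0"
  shows "odd_poly p"
proof -
  have vanish: "coeff p 0 / (real m + 1) + coeff p 2 / (real m + 3) + coeff p 4 / (real m + 5) = 0"
    if "m \<in> {0, n, 2 * n}" for m
  proof -
    have "even m" "poly_moment p m 1 = 0" using that n moments by auto
    with poly_moment_at_1[OF \<open>even m\<close> deg] show ?thesis by simp
  qed
  have "coeff p 0 = 0 \<and> coeff p 2 = 0 \<and> coeff p 4 = 0"
    using n vanish[of 0] vanish[of n] vanish[of "2 * n"]
    by (intro partial_fractions_vanish[of 0 "real n" "real (2 * n)"]) auto
  then show ?thesis
    unfolding odd_poly_def
  proof (intro allI impI)
    fix i :: nat assume "even i"
    show "coeff p i = 0"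
    proof (cases "i \<le> 5")
      case True
      with \<open>even i\<close> have "i = 0 \<or> i = 2 \<or> i = 4" by presburger
      then show ?thesis using \<open>coeff p 0 = 0 \<and> coeff p 2 = 0 \<and> coeff p 4 = 0\<close> by auto
    next
      case False
      then show ?thesis using deg by (intro coeff_eq_0) simp
    qed
  qed
qed

lemma abel_center_imp_poly_moments_vanish:
  assumes n: "n > 0" "even n" and center: "abel_center (\<lambda>t. t ^ (n - 1)) (\<lambda>t. poly p t)"
  shows "poly_moment p 0 1 = 0" "poly_moment p n 1 = 0" "poly_moment p (2 * n) 1 = 0"
proof -
  define P where "P t = (t ^ n - 1) / n" for t :: real
  define Sb where "Sb t = (poly_moment p n t - poly_moment p 0 t) / n" for t
  define Sc where "Sc t = (poly_moment p (2 * n) t - 2 * poly_moment p n t + poly_moment p 0 t) / n\<^sup>2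
    + (poly_moment p 0 t)\<^sup>2 / 2" for t
    \<comment> \<open>the last summand has derivative poly p t * poly_moment p 0 t\<close>
  have g: "continuous_on {-1..1} (\<lambda>t::real. t ^ (n - 1))" and f: "continuous_on {-1..1} (poly p)"
    by (intro continuous_intros)+
  have P_prim: "primitive P (\<lambda>t. t ^ (n - 1))"
    unfolding primitive_def P_def using n by (auto intro!: derivative_eq_intros)
  have P_1: "P 1 = 0" by (simp add: P_def)
  have Q_prim: "primitive (poly_moment p 0) (poly p)"
    using poly_moment_deriv[of p 0] by (simp add: primitive_def poly_moment_start)
  have Sb_prim: "primitive Sb (\<lambda>t. poly p t * P t)"
    unfolding primitive_def Sb_def P_def using n
    by (auto intro!: derivative_eq_intros poly_moment_deriv simp: poly_moment_start algebra_simps diff_divide_distrib)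
  have Sc_prim: "primitive Sc (\<lambda>t. poly p t * ((P t)\<^sup>2 + poly_moment p 0 t))"
    unfolding primitive_def Sc_def P_def using n
    by (auto intro!: derivative_eq_intros poly_moment_deriv
        simp: poly_moment_start algebra_simps power2_eq_square power_mult power_add diff_divide_distrib add_divide_distrib)
  have "poly_moment p 0 1 = 0 \<and> Sb 1 = 0 \<and> Sc 1 = 0"
    using abel_center_imp_moments_vanish[OF g f P_prim P_1 Q_prim Sb_prim Sc_prim center] by simp
  then show "poly_moment p 0 1 = 0" "poly_moment p n 1 = 0" "poly_moment p (2 * n) 1 = 0"
    using n by (auto simp: Sb_def Sc_def)
qed

theorem corollary1:
  fixes n :: nat and f :: "real poly"
  assumes "n > 0" and "even n" and "degree f \<le> 5"
  shows "abel_center (\<lambda>t. t ^ (n - 1)) (\<lambda>t. poly f t) \<longleftrightarrow> odd_poly f"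
proof
  assume "abel_center (\<lambda>t. t ^ (n - 1)) (\<lambda>t. poly f t)"
  from abel_center_imp_poly_moments_vanish[OF assms(1,2) this]
  show "odd_poly f" by (rule odd_poly_if_moments_vanish[OF assms])
next
  assume "odd_poly f"
  show "abel_center (\<lambda>t. t ^ (n - 1)) (\<lambda>t. poly f t)"
  proof (rule abel_center_if_odd)
    show "continuous_on {-1..1} (\<lambda>t::real. t ^ (n - 1))"
      by (intro continuous_intros)
    show "continuous_on {-1..1} (\<lambda>t. poly f t)"
      by (intro continuous_intros)
    show "(- t) ^ (n - 1) = - (t ^ (n - 1))" for t :: real
      using assms(1,2) by (simp add: power_minus_odd)
    show "poly f (- t) = - poly f t" for t
      by (rule poly_minus_if_odd_poly[OF \<open>odd_poly f\<close>])
  qed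
qed

end
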